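(* Let $G=(V_1\cup V_2,E)$ be a finite simple graph with $V_1\cap V_2=\emptyset$ such that the induced subgraphs $G[V_1]$ and $G[V_2]$ both have edge-connectivity at least $n$. Assume that every vertex of $V_1$ has at least $m$ neighbors in $V_2$, where $m\ge n+2$. Let $v_1\in V_1$ and $v_2\in V_2$ be adjacent vertices such that there are $m$ paths in $G$ from $v_1$ to $v_2$ that are pairwise internally vertex-disjoint and which only use edges having one endpoint in $V_1$ and the other in $V_2$. Then there are $m+n$ pairwise edge-disjoint paths in $G$ connecting $v_1$ and $v_2$.
   Context: A graph is $\ell$-edge-connected if it has more than one vertex and removing any set of fewer than $\ell$ edges leaves it connected; its edge-connectivity is the largest such $\ell$. The single edge $\{v_1,v_2\}$ counts as a path. *)

theory Defs
  imports Main
begin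

definition simple_graph :: "'a set \<Rightarrow> 'a set set \<Rightarrow> bool" where
  "simple_graph V E \<longleftrightarrow> finite V \<and> (\<forall>e\<in>E. e \<subseteq> V \<and> card e = 2)"

definition induced_edges :: "'a set set \<Rightarrow> 'a set \<Rightarrow> 'a set set" where
  "induced_edges E S = {e \<in> E. e \<subseteq> S}"

definition connected_graph :: "'a set \<Rightarrow> 'a set set \<Rightarrow> bool" where
  "connected_graph S F \<longleftrightarrow>
     (\<forall>u\<in>S. \<forall>v\<in>S. (\<lambda>x y. {x, y} \<in> F)\<^sup>*\<^sup>* u v)"

definition edge_connected :: "'a set \<Rightarrow> 'a set set \<Rightarrow> nat \<Rightarrow> bool" where
  "edge_connected S F l \<longleftrightarrow>
     card S > 1 \<and> (\<forall>X. X \<subseteq> F \<and> card X < l \<longrightarrow> connected_graph S (F - X))"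

text \<open>Edge-connectivity (largest l with l-edge-connected; 0 by convention if none) is at least n.\<close>
definition edge_connectivity_ge :: "'a set \<Rightarrow> 'a set set \<Rightarrow> nat \<Rightarrow> bool" where
  "edge_connectivity_ge S F n \<longleftrightarrow> n = 0 \<or> edge_connected S F n"

definition is_path :: "'a set set \<Rightarrow> 'a list \<Rightarrow> bool" where
  "is_path E p \<longleftrightarrow> length p \<ge> 2 \<and> distinct p \<and>
     (\<forall>i. Suc i < length p \<longrightarrow> {p ! i, p ! Suc i} \<in> E)"

definition path_edges :: "'a list \<Rightarrow> 'a set set" where
  "path_edges p = {{p ! i, p ! Suc i} | i. Suc i < length p}"

definition interior :: "'a list \<Rightarrow> 'a set" where
  "interior p = set (butlast (tl p))"

definition path_between :: "'a set set \<Rightarrow> 'a \<Rightarrow> 'a \<Rightarrow> 'a list \<Rightarrow> bool" where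
  "path_between E u v p \<longleftrightarrow> is_path E p \<and> hd p = u \<and> last p = v"

end

theory Submission
  imports Defs "HOL-Library.Disjoint_Sets" "HOL-Library.Transitive_Closure_Table"
begin

text \<open>
  Among the \<open>m\<close> internally disjoint crossing paths at most one is the one-edge path \<open>v\<^sub>1v\<^sub>2\<close>; keep
  \<open>m - n\<close> of them and reroute \<open>n\<close> of the others.  Such a path \<open>p\<close> leaves \<open>v\<^sub>1\<close> along a
  crossing edge \<open>v\<^sub>1a\<^sub>p\<close> with \<open>a\<^sub>p \<in> V\<^sub>2\<close> and enters \<open>v\<^sub>2\<close> along \<open>b\<^sub>pv\<^sub>2\<close> with \<open>b\<^sub>p \<in> V\<^sub>1\<close>, and the
  \<open>a\<^sub>p\<close> (resp. \<open>b\<^sub>p\<close>) are distinct because the paths are internally disjoint.  Since \<open>G[V\<^sub>2]\<close>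
  is \<open>n\<close>-edge-connected, the \<open>n\<close> vertices \<open>a\<^sub>p\<close> can be joined to \<open>v\<^sub>2\<close> by edge-disjoint paths
  inside \<open>V\<^sub>2\<close> (a fan version of Menger's theorem); prefixing the edges \<open>v\<^sub>1a\<^sub>p\<close> gives \<open>n\<close>
  paths, and symmetrically \<open>G[V\<^sub>1]\<close> gives \<open>n\<close> more through the edges \<open>b\<^sub>pv\<^sub>2\<close>.  The kept
  paths use only crossing edges of kept paths, the new ones only first or last edges of
  rerouted paths and edges inside one side, so all \<open>m + n\<close> paths are edge-disjoint.

  The fan lemma is proved with integral unit flows: a flow from the sources to the sink is
  augmented along residual paths, which exist as long as fewer than \<open>n\<close> sources are
  saturated since otherwise the reachable set would be cut off by fewer than \<open>n\<close> edges;
  a saturating flow is then decomposed into edge-disjoint paths.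
\<close>

section \<open>Paths as vertex lists\<close>

lemma successively_conj:
  "successively P xs \<Longrightarrow> successively Q xs \<Longrightarrow> successively (\<lambda>x y. P x y \<and> Q x y) xs"
  by (induction xs rule: induct_list012) auto

lemma rtranclp_imp_distinct_successively:
  assumes "r\<^sup>*\<^sup>* x y"
  obtains xs where "distinct (x # xs)" "successively r (x # xs)" "last (x # xs) = y"
proof -
  from assms obtain xs where "rtrancl_path r x xs y" "distinct (x # xs)"
    by (metis rtranclp_eq_rtrancl_path rtrancl_path_distinct)
  moreover have "successively r (x # xs) \<and> last (x # xs) = y" if "rtrancl_path r x xs y"
    using that by induction auto
  ultimately show thesis using that by blast
qed

lemma rtranclp_exits_set:
  assumes "r\<^sup>*\<^sup>* x y" "x \<in> R" "y \<notin> R"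
  obtains u v where "r u v" "u \<in> R" "v \<notin> R"
  using assms by (induction rule: rtranclp_induct) auto

lemma reachable_subset:
  assumes "x \<in> S" "\<And>u v. r u v \<Longrightarrow> v \<in> S"
  shows "{y. r\<^sup>*\<^sup>* x y} \<subseteq> S"
proof
  fix y assume "y \<in> {y. r\<^sup>*\<^sup>* x y}"
  then have "r\<^sup>*\<^sup>* x y" by simp
  then show "y \<in> S" using assms by (induction rule: rtranclp_induct) auto
qed

lemma path_edges_iff:
  "e \<in> path_edges p \<longleftrightarrow> (\<exists>xs x y ys. p = xs @ x # y # ys \<and> e = {x, y})"
proof
  assume "e \<in> path_edges p"
  then obtain i where i: "Suc i < length p" "e = {p ! i, p ! Suc i}"
    unfolding path_edges_def by blast
  have "p = take i p @ p ! i # p ! Suc i # drop (Suc (Suc i)) p"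
    using i(1) by (simp add: Cons_nth_drop_Suc)
  with i(2) show "\<exists>xs x y ys. p = xs @ x # y # ys \<and> e = {x, y}" by blast
next
  assume "\<exists>xs x y ys. p = xs @ x # y # ys \<and> e = {x, y}"
  then obtain xs x y ys where "p = xs @ x # y # ys" "e = {x, y}" by blast
  then have "Suc (length xs) < length p" "e = {p ! length xs, p ! Suc (length xs)}"
    by (simp_all add: nth_append)
  then show "e \<in> path_edges p" unfolding path_edges_def by blast
qed

lemma path_edges_Nil [simp]: "path_edges [] = {}"
  and path_edges_singleton [simp]: "path_edges [x] = {}"
  by (auto simp: path_edges_iff)

lemma path_edges_Cons_Cons [simp]:
  "path_edges (x # y # p) = insert {x, y} (path_edges (y # p))"
  by (auto simp: path_edges_iff Cons_eq_append_conv) blast+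

lemma path_edges_rev [simp]: "path_edges (rev p) = path_edges p"
proof -
  have "path_edges (rev p) \<subseteq> path_edges p" for p :: "'a list"
    by (force simp: path_edges_iff rev_eq_append_conv insert_commute)
  from this[of p] this[of "rev p"] show ?thesis by simp
qed

lemma path_edge_subset: "e \<in> path_edges p \<Longrightarrow> e \<subseteq> set p"
  by (auto simp: path_edges_iff)

lemma Union_path_edges: "2 \<le> length p \<Longrightarrow> \<Union> (path_edges p) = set p"
proof (induction p rule: induct_list012)
  case (3 x y zs)
  then show ?case by (cases zs) auto
qed auto

lemma path_edge_successively:
  "successively P p \<Longrightarrow> e \<in> path_edges p \<Longrightarrow> \<exists>x y. e = {x, y} \<and> P x y"
  by (auto simp: path_edges_iff successively_append_iff) blast+

lemma path_edges_subset_iff: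
  "path_edges p \<subseteq> F \<longleftrightarrow> successively (\<lambda>x y. {x, y} \<in> F) p"
  by (induction p rule: induct_list012) auto

lemma set_subset_if_edges_subset:
  assumes "successively (\<lambda>u v. {u, v} \<in> F) (x # xs)" "xs \<noteq> []" "\<forall>e\<in>F. e \<subseteq> S"
  shows "set (x # xs) \<subseteq> S"
proof -
  have "path_edges (x # xs) \<subseteq> F" using assms(1) by (simp add: path_edges_subset_iff)
  moreover have "\<Union> (path_edges (x # xs)) = set (x # xs)"
    using assms(2) by (intro Union_path_edges) (simp add: Suc_le_eq)
  ultimately show ?thesis using assms(3) by blast
qed

lemma empty_notin_path_edges: "{} \<notin> path_edges p"
  by (auto simp: path_edges_iff)

lemma is_path_iff:
  "is_path F p \<longleftrightarrow> 2 \<le> length p \<and> distinct p \<and> path_edges p \<subseteq> F"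
  by (auto simp: is_path_def path_edges_subset_iff successively_conv_nth)

lemma path_between_rev:
  "path_between F u v p \<Longrightarrow> path_between F v u (rev p)"
  by (auto simp: path_between_def is_path_iff hd_rev last_rev)

lemma path_between_Cons:
  assumes "path_between F x t q" "s \<notin> set q" "{s, x} \<in> F"
  shows "path_between F s t (s # q)" "path_edges (s # q) = insert {s, x} (path_edges q)"
proof -
  from assms(1) have "2 \<le> length q" "hd q = x"
    by (auto simp: path_between_def is_path_def)
  then obtain r where q: "q = x # r" "r \<noteq> []"
    by (cases q) (fastforce simp: Suc_le_eq)+
  then show "path_between F s t (s # q)" "path_edges (s # q) = insert {s, x} (path_edges q)"
    using assms by (auto simp: path_between_def is_path_iff)
qed

lemma path_between_mono: "path_between F u v p \<Longrightarrow> F \<subseteq> F' \<Longrightarrow> path_between F' u v p"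
  by (auto simp: path_between_def is_path_iff)

lemma path_between_edges_nonempty: "path_between F u v p \<Longrightarrow> path_edges p \<noteq> {}"
  by (cases p rule: remdups_adj.cases) (auto simp: path_between_def is_path_def)

lemma path_between_ends_neq:
  assumes "path_between F u v p"
  shows "u \<noteq> v"
proof -
  from assms obtain x y zs where "p = x # y # zs" "distinct p" "hd p = u" "last p = v"
    by (auto simp: path_between_def is_path_def numeral_2_eq_2 Suc_le_length_iff)
  then show ?thesis using last_in_set[of "y # zs"] by auto
qed

lemma path_edge_doubleton:
  "path_between F u v p \<Longrightarrow> e \<in> path_edges p \<Longrightarrow> \<exists>x y. e = {x, y} \<and> x \<noteq> y"
  by (auto simp: path_edges_iff path_between_def is_path_def) blast

lemma path_between_edge_ends:
  assumes p: "path_between F u v p" and e: "{u, v} \<in> path_edges p"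
  shows "p = [u, v]"
proof -
  have uv: "u \<noteq> v" using path_between_ends_neq[OF p] .
  from e obtain xs x y ys where xy: "p = xs @ x # y # ys" "{u, v} = {x, y}"
    by (auto simp: path_edges_iff)
  have p': "distinct p" "hd p = u" "last p = v"
    using p by (auto simp: path_between_def is_path_def)
  show ?thesis
  proof (cases "x = u")
    case True
    then have "y = v" using xy(2) uv by (auto simp: doubleton_eq_iff)
    then show ?thesis using True xy(1) p'
      by (cases xs; cases ys rule: rev_cases) auto
  next
    case False
    then have "x = v" "y = u" using xy(2) by (auto simp: doubleton_eq_iff)
    then show ?thesis using xy(1) p' uv
      by (cases xs) auto
  qed
qed

lemma path_edge_not_both_ends:
  assumes p: "path_between F u v p" "p \<noteq> [u, v]" and e: "e \<in> path_edges p"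
  shows "\<not> (u \<in> e \<and> v \<in> e)"
proof
  assume "u \<in> e \<and> v \<in> e"
  moreover obtain x y where "e = {x, y}" "x \<noteq> y" using path_edge_doubleton[OF p(1) e] by blast
  moreover have "u \<noteq> v" using path_between_ends_neq[OF p(1)] .
  ultimately have "e = {u, v}" by auto
  then show False using path_between_edge_ends[OF p(1)] e p(2) by simp
qed

lemma interior_rev [simp]: "interior (rev p) = interior p"
  by (metis butlast_rev butlast_tl interior_def rev_rev_ident set_rev)

lemma ends_notin_interior:
  assumes "distinct p"
  shows "hd p \<notin> interior p" "last p \<notin> interior p"
proof -
  show "hd p \<notin> interior p"
    using assms by (cases p) (auto simp: interior_def dest: in_set_butlastD)
  show "last p \<notin> interior p"
    using assms by (cases p rule: rev_cases) (auto simp: interior_def butlast_tl intro: list.set_sel(2) tl_Nil)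
qed

lemma set_eq_ends_Un_interior: "p \<noteq> [] \<Longrightarrow> set p = {hd p, last p} \<union> interior p"
proof (induction p rule: induct_list012)
  case (3 x y zs)
  then show ?case
    by (cases zs rule: rev_cases) (auto simp: interior_def)
qed (auto simp: interior_def)

lemma path_between_interior:
  assumes "path_between F u v p"
  shows "set p = {u, v} \<union> interior p" "u \<notin> interior p" "v \<notin> interior p"
proof -
  from assms have "p \<noteq> []" "distinct p" "hd p = u" "last p = v"
    by (auto simp: path_between_def is_path_def)
  then show "set p = {u, v} \<union> interior p" "u \<notin> interior p" "v \<notin> interior p"
    using ends_notin_interior[of p] set_eq_ends_Un_interior[of p] by auto
qed

lemma second_vertex_in_interior:
  assumes "path_between F s t p" "p \<noteq> [s, t]"
  shows "hd (tl p) \<in> interior p" "{s, hd (tl p)} \<in> path_edges p"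
proof -
  from assms(1) obtain x r where p: "p = s # x # r"
    by (auto simp: path_between_def is_path_def numeral_2_eq_2 Suc_le_length_iff)
  with assms have "r \<noteq> []" by (auto simp: path_between_def)
  with p show "hd (tl p) \<in> interior p" "{s, hd (tl p)} \<in> path_edges p"
    by (auto simp: interior_def)
qed

lemma internally_disjoint_imp_edge_disjoint:
  assumes paths: "\<And>p. p \<in> P \<Longrightarrow> path_between F u v p" and int: "disjoint_family_on interior P"
  shows "disjoint_family_on path_edges P"
  unfolding disjoint_family_on_def
proof (intro ballI impI equals0I)
  fix p q e assume pq: "p \<in> P" "q \<in> P" "p \<noteq> q" and e: "e \<in> path_edges p \<inter> path_edges q"
  then obtain r where r: "r \<in> {p, q}" "r \<noteq> [u, v]" by blast
  have "interior p \<inter> interior q = {}" using disjoint_family_onD[OF int pq] .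
  then have "e \<subseteq> {u, v}"
    using e path_edge_subset path_between_interior[OF paths[OF pq(1)]]
      path_between_interior[OF paths[OF pq(2)]] by blast
  moreover obtain x y where "e = {x, y}" "x \<noteq> y" using path_edge_doubleton[OF paths[OF pq(1)]] e by blast
  ultimately have "u \<in> e \<and> v \<in> e" by auto
  with r e pq show False using path_edge_not_both_ends[OF paths] by blast
qed

section \<open>Integral unit flows\<close>

definition outflow :: "'a set \<Rightarrow> ('a \<Rightarrow> 'a \<Rightarrow> int) \<Rightarrow> 'a \<Rightarrow> int" where
  "outflow S f u = (\<Sum>v\<in>S. f u v)"

definition skew :: "('a \<Rightarrow> 'a \<Rightarrow> int) \<Rightarrow> bool" where
  "skew f \<longleftrightarrow> (\<forall>u v. f v u = - f u v)"

text \<open>\<open>f u v = 1\<close> means that one unit of flow runs from \<open>u\<close> to \<open>v\<close> along the edge \<open>{u, v}\<close>.\<close>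

definition unit_flow :: "'a set set \<Rightarrow> ('a \<Rightarrow> 'a \<Rightarrow> int) \<Rightarrow> bool" where
  "unit_flow F f \<longleftrightarrow>
     skew f \<and> (\<forall>x y. \<bar>f x y\<bar> \<le> 1) \<and> (\<forall>x y. f x y \<noteq> 0 \<longrightarrow> {x, y} \<in> F)"

lemma unit_flow_bounds: "unit_flow F f \<Longrightarrow> - 1 \<le> f u v \<and> f u v \<le> 1"
  by (simp add: unit_flow_def abs_le_iff)

lemma unit_flow_edge: "unit_flow F f \<Longrightarrow> f u v \<noteq> 0 \<Longrightarrow> {u, v} \<in> F"
  by (simp add: unit_flow_def)

definition push_edge :: "('a \<Rightarrow> 'a \<Rightarrow> int) \<Rightarrow> 'a \<Rightarrow> 'a \<Rightarrow> 'a \<Rightarrow> 'a \<Rightarrow> int" where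
  "push_edge f x y u v =
     f u v + (if (u, v) = (x, y) then 1 else if (u, v) = (y, x) then -1 else 0)"

fun push_path :: "('a \<Rightarrow> 'a \<Rightarrow> int) \<Rightarrow> 'a list \<Rightarrow> 'a \<Rightarrow> 'a \<Rightarrow> int" where
  "push_path f (x # y # p) = push_path (push_edge f x y) (y # p)"
| "push_path f p = f"

lemma outflow_push_edge:
  assumes "finite S" "x \<in> S" "y \<in> S" "x \<noteq> y"
  shows "outflow S (push_edge f x y) u =
    outflow S f u + (if u = x then 1 else 0) - (if u = y then 1 else 0)"
proof -
  have "outflow S (push_edge f x y) u = outflow S f u +
      (\<Sum>v\<in>S. (if v = y \<and> u = x then 1 else 0) - (if v = x \<and> u = y then 1 else 0))"
    using assms(4) by (auto simp: outflow_def push_edge_def sum.distrib intro: sum.cong)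
  also have "\<dots> = outflow S f u + (if u = x then 1 else 0) - (if u = y then 1 else 0)"
    using assms(1-3) by (simp add: sum_subtractf sum.delta)
  finally show ?thesis .
qed

lemma push_path_outside:
  "{u, v} \<notin> path_edges p \<Longrightarrow> push_path f p u v = f u v"
  by (induction f p rule: push_path.induct) (auto simp: push_edge_def doubleton_eq_iff)

lemma skew_push_edge:
  assumes "x \<noteq> y" "skew f"
  shows "skew (push_edge f x y)"
  unfolding skew_def
proof (intro allI)
  fix u v
  have "f v u = - f u v" using assms(2) unfolding skew_def by blast
  then show "push_edge f x y v u = - push_edge f x y u v"
    using assms(1) by (auto simp: push_edge_def)
qed

lemma skew_push_path: "skew f \<Longrightarrow> distinct p \<Longrightarrow> skew (push_path f p)"
  by (induction f p rule: push_path.induct) (auto simp: skew_push_edge)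

lemma outflow_push_path:
  assumes "finite S" "set p \<subseteq> S" "distinct p" "p \<noteq> []"
  shows "outflow S (push_path f p) u =
    outflow S f u + (if u = hd p then 1 else 0) - (if u = last p then 1 else 0)"
  using assms by (induction f p rule: push_path.induct) (auto simp: outflow_push_edge)

lemma push_path_along:
  "distinct p \<Longrightarrow> successively (\<lambda>u v. push_path f p u v = f u v + 1) p"
proof (induction f p rule: push_path.induct)
  case (1 f x y p)
  have "{x, y} \<notin> path_edges (y # p)"
    using "1.prems" path_edge_subset by fastforce
  then have "push_path f (x # y # p) x y = f x y + 1"
    by (simp add: push_path_outside push_edge_def)
  moreover have "successively (\<lambda>u v. push_path f (x # y # p) u v = f u v + 1) (y # p)"
  proof (rule successively_mono[OF "1.IH"])
    show "distinct (y # p)" using "1.prems" by simp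
    fix u v assume "u \<in> set (y # p)" "v \<in> set (y # p)"
      and "push_path (push_edge f x y) (y # p) u v = push_edge f x y u v + 1"
    moreover have "x \<notin> set (y # p)" using "1.prems" by simp
    ultimately show "push_path f (x # y # p) u v = f u v + 1"
      by (auto simp: push_edge_def)
  qed
  ultimately show ?case by simp
qed auto

lemma unit_flow_push_path:
  assumes f: "unit_flow F f" and p: "distinct p"
    and res: "successively (\<lambda>u v. {u, v} \<in> F \<and> f u v < 1) p"
  shows "unit_flow F (push_path f p)"
proof -
  let ?g = "push_path f p"
  have skew: "skew ?g" using f p by (simp add: unit_flow_def skew_push_path)
  have "\<bar>?g u v\<bar> \<le> 1 \<and> (?g u v \<noteq> 0 \<longrightarrow> {u, v} \<in> F)" for u v
  proof (cases "{u, v} \<in> path_edges p")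
    case True
    have "successively (\<lambda>a b. ?g a b = f a b + 1 \<and> {a, b} \<in> F \<and> f a b < 1) p"
      using successively_conj[OF push_path_along[OF p] res] .
    then obtain a b where ab: "{u, v} = {a, b}" "?g a b = f a b + 1" "{a, b} \<in> F" "f a b < 1"
      using path_edge_successively[OF _ True] by blast
    moreover have "\<bar>f a b\<bar> \<le> 1" "?g b a = - ?g a b"
      using f skew unfolding unit_flow_def skew_def by blast+
    ultimately show ?thesis by (auto simp: doubleton_eq_iff insert_commute)
  next
    case False
    then show ?thesis using f by (simp add: push_path_outside unit_flow_def)
  qed
  with skew show ?thesis by (simp add: unit_flow_def)
qed

definition support :: "('a \<Rightarrow> 'a \<Rightarrow> int) \<Rightarrow> 'a set set" where
  "support f = {{u, v} | u v. f u v \<noteq> 0}"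

lemma cancel_positive_path:
  assumes f: "unit_flow F f" and p: "distinct p" and pos: "successively (\<lambda>u v. f u v = 1) p"
  shows "unit_flow F (push_path f (rev p))" "support (push_path f (rev p)) \<subseteq> support f - path_edges p"
proof -
  let ?g = "push_path f (rev p)"
  have antisym: "f v u = - f u v" for u v
    using f unfolding unit_flow_def skew_def by blast
  have "{v, u} \<in> F \<and> f v u < 1" if "f u v = 1" for u v
    using f that antisym[of u v] by (auto simp: unit_flow_def insert_commute)
  then have "successively (\<lambda>u v. {u, v} \<in> F \<and> f u v < 1) (rev p)"
    unfolding successively_rev by (rule successively_mono[OF pos])
  with f p show g: "unit_flow F ?g" by (simp add: unit_flow_push_path)
  have zero: "?g u v = 0" if "{u, v} \<in> path_edges p" for u v
  proof -
    have "successively (\<lambda>x y. f y x = 1) (rev p)" using pos by simp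
    with p have "successively (\<lambda>x y. ?g x y = f x y + 1 \<and> f y x = 1) (rev p)"
      by (intro successively_conj push_path_along) simp_all
    moreover have "{u, v} \<in> path_edges (rev p)" using that by simp
    ultimately obtain x y where "{u, v} = {x, y}" "?g x y = f x y + 1" "f y x = 1"
      using path_edge_successively by blast
    moreover have "?g y x = - ?g x y" using g unfolding unit_flow_def skew_def by blast
    ultimately show ?thesis using antisym[of y x] by (auto simp: doubleton_eq_iff)
  qed
  show "support ?g \<subseteq> support f - path_edges p"
  proof
    fix e assume "e \<in> support ?g"
    then obtain u v where e: "e = {u, v}" "?g u v \<noteq> 0" by (auto simp: support_def)
    with zero have "e \<notin> path_edges p" by blast
    with e have "f u v \<noteq> 0" by (simp add: push_path_outside)
    with e \<open>e \<notin> path_edges p\<close> show "e \<in> support f - path_edges p"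
      by (auto simp: support_def)
  qed
qed

lemma sum_outflow_eq_cut:
  assumes "finite S" "R \<subseteq> S" "skew f"
  shows "(\<Sum>u\<in>R. outflow S f u) = (\<Sum>u\<in>R. \<Sum>v\<in>S - R. f u v)"
proof -
  have skew: "f u v = - f v u" for u v
    using assms(3) unfolding skew_def by blast
  have "(\<Sum>u\<in>R. \<Sum>v\<in>R. f u v) = (\<Sum>v\<in>R. \<Sum>u\<in>R. f u v)"
    by (rule sum.swap)
  also have "\<dots> = (\<Sum>v\<in>R. \<Sum>u\<in>R. - f v u)"
    by (intro sum.cong refl skew)
  also have "\<dots> = - (\<Sum>v\<in>R. \<Sum>u\<in>R. f v u)"
    by (simp add: sum_negf)
  finally have inner: "(\<Sum>u\<in>R. \<Sum>v\<in>R. f u v) = 0" by simp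
  have "(\<Sum>u\<in>R. outflow S f u) = (\<Sum>u\<in>R. (\<Sum>v\<in>S - R. f u v) + (\<Sum>v\<in>R. f u v))"
    unfolding outflow_def using assms(1,2) by (intro sum.cong refl sum.subset_diff)
  then show ?thesis using inner by (simp add: sum.distrib)
qed

lemma card_cut_le_sum_outflow:
  assumes "finite S" "R \<subseteq> S" "unit_flow F f"
    and full: "\<And>u v. u \<in> R \<Longrightarrow> v \<in> S - R \<Longrightarrow> {u, v} \<in> F \<Longrightarrow> f u v = 1"
  shows "int (card {{u, v} | u v. u \<in> R \<and> v \<in> S - R \<and> {u, v} \<in> F}) \<le> (\<Sum>u\<in>R. outflow S f u)"
proof -
  define pairs where "pairs = {p \<in> R \<times> (S - R). {fst p, snd p} \<in> F}"
  have fin: "finite (R \<times> (S - R))" using assms(1,2) finite_subset by blast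
  have "(\<Sum>u\<in>R. outflow S f u) = (\<Sum>(u, v)\<in>R \<times> (S - R). f u v)"
    using assms(1-3) by (simp add: sum_outflow_eq_cut unit_flow_def sum.cartesian_product)
  also have "\<dots> = (\<Sum>(u, v)\<in>R \<times> (S - R). if {u, v} \<in> F then 1 else 0)"
    using assms(3) full by (intro sum.cong) (auto simp: unit_flow_def, blast)
  also have "\<dots> = int (card pairs)"
    using fin by (simp add: pairs_def sum.If_cases case_prod_unfold Int_def)
  finally have "(\<Sum>u\<in>R. outflow S f u) = int (card pairs)" .
  moreover have "{{u, v} | u v. u \<in> R \<and> v \<in> S - R \<and> {u, v} \<in> F} = (\<lambda>p. {fst p, snd p}) ` pairs"
    by (auto simp: pairs_def image_iff) blast+
  moreover have "card ((\<lambda>p. {fst p, snd p}) ` pairs) \<le> card pairs"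
    using fin by (intro card_image_le) (auto simp: pairs_def intro: finite_subset)
  ultimately show ?thesis by simp
qed

section \<open>Edge-disjoint fans\<close>

lemma edge_connectivity_geD:
  "edge_connectivity_ge S F l \<Longrightarrow> X \<subseteq> F \<Longrightarrow> card X < l \<Longrightarrow> connected_graph S (F - X)"
  by (auto simp: edge_connectivity_ge_def edge_connected_def)

definition fan_flow :: "'a set \<Rightarrow> 'a set set \<Rightarrow> 'a set \<Rightarrow> 'a \<Rightarrow> ('a \<Rightarrow> 'a \<Rightarrow> int) \<Rightarrow> bool" where
  "fan_flow S F A t f \<longleftrightarrow> unit_flow F f \<and>
     (\<forall>u \<in> S - A - {t}. outflow S f u = 0) \<and> (\<forall>a\<in>A. outflow S f a \<in> {0, 1})"

definition saturated :: "'a set \<Rightarrow> ('a \<Rightarrow> 'a \<Rightarrow> int) \<Rightarrow> 'a set \<Rightarrow> 'a set" where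
  "saturated S f A = {a\<in>A. outflow S f a = 1}"

lemma finite_saturated: "finite A \<Longrightarrow> finite (saturated S f A)"
  by (simp add: saturated_def)

lemma fan_flow_outflow:
  "fan_flow S F A t f \<Longrightarrow> u \<in> S \<Longrightarrow> u \<noteq> t \<Longrightarrow>
    outflow S f u = (if u \<in> saturated S f A then 1 else 0)"
  by (cases "u \<in> A") (auto simp: fan_flow_def saturated_def)

lemma fan_flow_residual_path:
  assumes fin: "finite S" and FS: "\<forall>e\<in>F. e \<subseteq> S"
    and conn: "edge_connectivity_ge S F (card A)"
    and A: "A \<subseteq> S" "t \<in> S" "t \<notin> A" and f: "fan_flow S F A t f"
    and less: "card (saturated S f A) < card A"
    and a0: "a0 \<in> A" "outflow S f a0 = 0"
  shows "(\<lambda>u v. {u, v} \<in> F \<and> f u v < 1)\<^sup>*\<^sup>* a0 t"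
proof (rule ccontr)
  define res where "res = (\<lambda>u v. {u, v} \<in> F \<and> f u v < 1)"
  define R where "R = {v. res\<^sup>*\<^sup>* a0 v}"
  define X where "X = {{u, v} | u v. u \<in> R \<and> v \<in> S - R \<and> {u, v} \<in> F}"
  assume "\<not> res\<^sup>*\<^sup>* a0 t"
  then have tR: "t \<notin> R" by (simp add: R_def res_def)
  have RS: "R \<subseteq> S"
    unfolding R_def using a0(1) A(1) FS by (intro reachable_subset) (auto simp: res_def)
  have uf: "unit_flow F f" using f by (simp add: fan_flow_def)
  have full: "f u v = 1" if "u \<in> R" "v \<in> S - R" "{u, v} \<in> F" for u v
  proof -
    have "\<not> res u v"
      using that by (auto simp: R_def intro: rtranclp.rtrancl_into_rtrancl)
    with unit_flow_bounds[OF uf, of u v] that(3) show ?thesis by (simp add: res_def)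
  qed
  have "(\<Sum>u\<in>R. outflow S f u) = (\<Sum>u\<in>R. if u \<in> saturated S f A then 1 else 0)"
    using fan_flow_outflow[OF f] tR RS by (intro sum.cong) (auto simp del: of_nat_eq_1_iff, fastforce+)
  also have "\<dots> \<le> int (card (saturated S f A))"
    using fin RS A(1) by (simp add: sum.If_cases card_mono finite_subset saturated_def)
  txt \<open>Every edge of \<open>F\<close> leaving \<open>R\<close> carries a unit out of \<open>R\<close>, so the cut \<open>X\<close> has at most
    as many edges as there are saturated sources.\<close>
  finally have "card X < card A"
    using card_cut_le_sum_outflow[OF fin RS uf full] less by (simp add: X_def)
  moreover have "X \<subseteq> F" by (auto simp: X_def)
  ultimately have "connected_graph S (F - X)" by (rule edge_connectivity_geD[OF conn, rotated])
  then have "(\<lambda>u v. {u, v} \<in> F - X)\<^sup>*\<^sup>* a0 t"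
    using a0(1) A by (auto simp: connected_graph_def)
  moreover have "a0 \<in> R" by (simp add: R_def)
  ultimately obtain u v where "{u, v} \<in> F - X" "u \<in> R" "v \<notin> R"
    using tR by (rule rtranclp_exits_set)
  moreover have "v \<in> S" using calculation(1) FS by auto
  ultimately show False by (auto simp: X_def)
qed

lemma fan_flow_augment:
  assumes fin: "finite S" and FS: "\<forall>e\<in>F. e \<subseteq> S"
    and conn: "edge_connectivity_ge S F (card A)"
    and A: "A \<subseteq> S" "t \<in> S" "t \<notin> A" and f: "fan_flow S F A t f"
    and less: "card (saturated S f A) < card A"
  shows "\<exists>f'. fan_flow S F A t f' \<and> card (saturated S f' A) = Suc (card (saturated S f A))"
proof -
  have finA: "finite A" using fin A(1) finite_subset by blast
  obtain a0 where a0: "a0 \<in> A" "a0 \<notin> saturated S f A"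
    using less by (metis card_mono finite_subset mem_Collect_eq not_le saturated_def subsetI finA)
  then have out0: "outflow S f a0 = 0" using f by (auto simp: fan_flow_def saturated_def)
  obtain xs where p: "distinct (a0 # xs)" "successively (\<lambda>u v. {u, v} \<in> F \<and> f u v < 1) (a0 # xs)"
    "last (a0 # xs) = t"
    using fan_flow_residual_path[OF fin FS conn A f less a0(1) out0]
    by (rule rtranclp_imp_distinct_successively)
  have "xs \<noteq> []" using p(3) a0(1) A(3) by auto
  then have pS: "set (a0 # xs) \<subseteq> S"
    using p(2) FS by (intro set_subset_if_edges_subset) (auto elim: successively_mono)
  define f' where "f' = push_path f (a0 # xs)"
  have out': "outflow S f' u = outflow S f u + (if u = a0 then 1 else 0) - (if u = t then 1 else 0)" for u
    using outflow_push_path[OF fin pS p(1)] p(3) by (simp add: f'_def)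
  have "unit_flow F f'"
    using f p(1,2) by (simp add: f'_def fan_flow_def unit_flow_push_path)
  then have "fan_flow S F A t f'"
    using f out' out0 a0(1) A(3) by (auto simp: fan_flow_def)
  moreover have "saturated S f' A = insert a0 (saturated S f A)"
    using out' out0 a0(1) A(3) by (auto simp: saturated_def)
  moreover have "finite (saturated S f A)" using finA by (simp add: saturated_def)
  ultimately show ?thesis using a0(2) by auto
qed

lemma saturating_fan_flow_exists:
  assumes "finite S" "\<forall>e\<in>F. e \<subseteq> S" "edge_connectivity_ge S F (card A)"
    and "A \<subseteq> S" "t \<in> S" "t \<notin> A"
  shows "k \<le> card A \<Longrightarrow> \<exists>f. fan_flow S F A t f \<and> card (saturated S f A) = k"
proof (induction k)
  case 0
  have "fan_flow S F A t (\<lambda>_ _. 0)"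
    by (simp add: fan_flow_def unit_flow_def skew_def outflow_def)
  moreover have "saturated S (\<lambda>_ _. 0) A = {}" by (simp add: saturated_def outflow_def)
  ultimately show ?case by auto
next
  case (Suc k)
  then obtain f where "fan_flow S F A t f" "card (saturated S f A) = k" by auto
  with Suc.prems fan_flow_augment[OF assms] show ?case by auto
qed

lemma fan_flow_positive_path:
  assumes fin: "finite S" and FS: "\<forall>e\<in>F. e \<subseteq> S" and f: "fan_flow S F A t f"
    and a: "a \<in> A" "a \<in> S" "outflow S f a = 1"
  shows "(\<lambda>u v. f u v = 1)\<^sup>*\<^sup>* a t"
proof (rule ccontr)
  define R where "R = {v. (\<lambda>u v. f u v = 1)\<^sup>*\<^sup>* a v}"
  assume "\<not> (\<lambda>u v. f u v = 1)\<^sup>*\<^sup>* a t"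
  then have tR: "t \<notin> R" by (simp add: R_def)
  have uf: "unit_flow F f" using f by (simp add: fan_flow_def)
  have "v \<in> S" if "f u v = 1" for u v
    using unit_flow_edge[OF uf, of u v] that FS by auto
  then have RS: "R \<subseteq> S"
    unfolding R_def using a(2) by (intro reachable_subset)
  have aR: "a \<in> R" by (simp add: R_def)
  have nonneg: "0 \<le> outflow S f u" if "u \<in> R" for u
  proof -
    have "u \<in> S" "u \<noteq> t" using that RS tR by auto
    then show ?thesis using fan_flow_outflow[OF f] by simp
  qed
  have "outflow S f a \<le> (\<Sum>u\<in>R. outflow S f u)"
    using nonneg aR RS fin by (intro member_le_sum) (auto intro: finite_subset)
  then have "1 \<le> (\<Sum>u\<in>R. outflow S f u)" using a(3) by simp
  also have "\<dots> = (\<Sum>u\<in>R. \<Sum>v\<in>S - R. f u v)"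
    using fin RS uf by (simp add: sum_outflow_eq_cut unit_flow_def)
  also have "\<dots> \<le> 0"
  proof (intro sum_nonpos ballI)
    fix u v assume "u \<in> R" "v \<in> S - R"
    then have "f u v \<noteq> 1" by (auto simp: R_def intro: rtranclp.rtrancl_into_rtrancl)
    with unit_flow_bounds[OF uf, of u v] show "f u v \<le> 0" by linarith
  qed
  finally show False by simp
qed

lemma fan_flow_extract_path:
  assumes fin: "finite S" and FS: "\<forall>e\<in>F. e \<subseteq> S"
    and A: "A \<subseteq> S" "t \<notin> A" and f: "fan_flow S F A t f" and a: "a \<in> saturated S f A"
  obtains p f' where "fan_flow S F A t f'" "path_between F a t p" "path_edges p \<subseteq> support f"
    "support f' \<subseteq> support f - path_edges p" "saturated S f' A = saturated S f A - {a}"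
proof -
  have aA: "a \<in> A" "a \<in> S" "outflow S f a = 1" using a A(1) by (auto simp: saturated_def)
  have uf: "unit_flow F f" using f by (simp add: fan_flow_def)
  obtain xs where p: "distinct (a # xs)" "successively (\<lambda>u v. f u v = 1) (a # xs)"
    "last (a # xs) = t"
    using fan_flow_positive_path[OF fin FS f aA] by (rule rtranclp_imp_distinct_successively)
  have "xs \<noteq> []" using p(3) aA(1) A(2) by auto
  have "{u, v} \<in> F" if "f u v = 1" for u v
    using unit_flow_edge[OF uf, of u v] that by simp
  then have edges: "successively (\<lambda>u v. {u, v} \<in> F) (a # xs)"
    by (rule successively_mono[OF p(2)])
  then have pS: "set (a # xs) \<subseteq> S"
    using \<open>xs \<noteq> []\<close> FS by (rule set_subset_if_edges_subset)
  define f' where "f' = push_path f (rev (a # xs))"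
  have out': "outflow S f' u = outflow S f u + (if u = t then 1 else 0) - (if u = a then 1 else 0)" for u
  proof -
    have "hd (rev (a # xs)) = t" "last (rev (a # xs)) = a"
      using p(3) by (metis hd_rev, simp)
    then show ?thesis using outflow_push_path[of S "rev (a # xs)" f u] fin pS p(1)
      by (simp add: f'_def)
  qed
  have "unit_flow F f'" using cancel_positive_path(1)[OF uf p(1,2)] by (simp add: f'_def)
  then have "fan_flow S F A t f'"
    using f out' aA A(2) by (auto simp: fan_flow_def)
  moreover have "path_between F a t (a # xs)"
    using p(1,3) edges \<open>xs \<noteq> []\<close>
    by (simp add: path_between_def is_path_iff path_edges_subset_iff Suc_le_eq)
  moreover have "path_edges (a # xs) \<subseteq> support f"
    using path_edge_successively[OF p(2)] by (force simp: support_def)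
  moreover have "saturated S f' A = saturated S f A - {a}"
    using out' aA A(2) by (auto simp: saturated_def)
  ultimately show thesis
    using that cancel_positive_path(2)[OF uf p(1,2)] by (simp add: f'_def)
qed

lemma disjoint_family_on_fun_upd_insert:
  assumes "a \<notin> I" "disjoint_family_on (\<lambda>i. A (g i)) I" "A x \<inter> (\<Union>i\<in>I. A (g i)) = {}"
  shows "disjoint_family_on (\<lambda>i. A ((g(a := x)) i)) (insert a I)"
proof -
  have "disjoint_family_on (\<lambda>i. A ((g(a := x)) i)) I"
    using assms(1,2) by (rule_tac disjoint_family_on_bisimulation[OF assms(2)]) auto
  moreover have "(\<Union>i\<in>I. A ((g(a := x)) i)) = (\<Union>i\<in>I. A (g i))"
    using assms(1) by (intro SUP_cong) auto
  ultimately show ?thesis using assms(1,3) by (simp add: disjoint_family_on_insert)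
qed

lemma fan_flow_paths:
  assumes "finite S" "\<forall>e\<in>F. e \<subseteq> S" "A \<subseteq> S" "t \<notin> A"
  shows "fan_flow S F A t f \<Longrightarrow> \<exists>q.
    (\<forall>a\<in>saturated S f A. path_between F a t (q a) \<and> path_edges (q a) \<subseteq> support f) \<and>
    disjoint_family_on (\<lambda>a. path_edges (q a)) (saturated S f A)"
proof (induction "card (saturated S f A)" arbitrary: f)
  case 0
  have "finite (saturated S f A)"
    using finite_subset[OF assms(3,1)] by (rule finite_saturated)
  with 0 have "saturated S f A = {}" by simp
  then show ?case by (simp add: disjoint_family_on_def)
next
  case (Suc k)
  then have "saturated S f A \<noteq> {}" by force
  then obtain a where a: "a \<in> saturated S f A" by blast
  obtain p f' where pf: "fan_flow S F A t f'" "path_between F a t p" "path_edges p \<subseteq> support f"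
    "support f' \<subseteq> support f - path_edges p" "saturated S f' A = saturated S f A - {a}"
    using fan_flow_extract_path[OF assms Suc.prems a] .
  have "finite (saturated S f A)"
    using finite_subset[OF assms(3,1)] by (rule finite_saturated)
  then have "k = card (saturated S f' A)" using Suc.hyps(2) a pf(5) by simp
  from Suc.hyps(1)[OF this pf(1)] obtain q where q: "\<forall>b\<in>saturated S f' A. path_between F b t (q b) \<and>
    path_edges (q b) \<subseteq> support f'" "disjoint_family_on (\<lambda>b. path_edges (q b)) (saturated S f' A)"
    by blast
  have sat: "saturated S f A = insert a (saturated S f' A)" "a \<notin> saturated S f' A"
    using pf(5) a by auto
  have q': "(q(a := p)) b = q b" if "b \<in> saturated S f' A" for b
    using sat(2) that by auto
  have paths: "\<forall>b\<in>saturated S f A. path_between F b t ((q(a := p)) b) \<and>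
      path_edges ((q(a := p)) b) \<subseteq> support f"
  proof
    fix b assume "b \<in> saturated S f A"
    then consider "b = a" | "b \<in> saturated S f' A" using sat(1) by blast
    then show "path_between F b t ((q(a := p)) b) \<and> path_edges ((q(a := p)) b) \<subseteq> support f"
      using q(1) q' pf(2-4) by cases fastforce+
  qed
  have "path_edges p \<inter> (\<Union>b\<in>saturated S f' A. path_edges (q b)) = {}"
    using q(1) pf(4) by blast
  from disjoint_family_on_fun_upd_insert[where A = path_edges and g = q, OF sat(2) q(2) this]
  have "disjoint_family_on (\<lambda>b. path_edges ((q(a := p)) b)) (saturated S f A)"
    unfolding sat(1) .
  with paths show ?case by blast
qed

lemma edge_disjoint_fan:
  assumes fin: "finite S" and FS: "\<forall>e\<in>F. e \<subseteq> S" and conn: "edge_connectivity_ge S F (card A)"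
    and A: "A \<subseteq> S" "t \<in> S" "t \<notin> A"
  obtains q where "\<forall>a\<in>A. path_between F a t (q a)" "disjoint_family_on (\<lambda>a. path_edges (q a)) A"
proof -
  obtain f where f: "fan_flow S F A t f" "card (saturated S f A) = card A"
    using saturating_fan_flow_exists[OF assms] by blast
  have "saturated S f A = A"
    using f(2) finite_subset[OF A(1) fin] by (intro card_subset_eq) (auto simp: saturated_def)
  then show thesis
    using fan_flow_paths[OF fin FS A(1,3) f(1)] that by auto
qed

section \<open>Rerouting crossing paths\<close>

definition crossing :: "'a set \<Rightarrow> 'a set \<Rightarrow> 'a set \<Rightarrow> bool" where
  "crossing V W e \<longleftrightarrow> (\<exists>x y. e = {x, y} \<and> x \<in> V \<and> y \<in> W)"

lemma crossing_commute: "crossing V W e \<longleftrightarrow> crossing W V e"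
  by (auto simp: crossing_def insert_commute)

lemma crossing_not_subset: "crossing V W e \<Longrightarrow> V \<inter> W = {} \<Longrightarrow> \<not> e \<subseteq> V \<and> \<not> e \<subseteq> W"
  by (auto simp: crossing_def)

lemma crossing_other_end: "crossing V W {s, x} \<Longrightarrow> s \<in> V \<Longrightarrow> V \<inter> W = {} \<Longrightarrow> x \<in> W"
  by (auto simp: crossing_def doubleton_eq_iff)

definition edge_disjoint_paths :: "'a set set \<Rightarrow> 'a \<Rightarrow> 'a \<Rightarrow> 'a list set \<Rightarrow> bool" where
  "edge_disjoint_paths E s t Q \<longleftrightarrow>
     finite Q \<and> (\<forall>q\<in>Q. path_between E s t q) \<and> disjoint_family_on path_edges Q"

lemma fan_extend_source:
  assumes q: "\<And>x. x \<in> X \<Longrightarrow> path_between F x t (q x)"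
    and disj: "disjoint_family_on (\<lambda>x. path_edges (q x)) X"
    and FW: "\<forall>e\<in>F. e \<subseteq> W" and FE: "F \<subseteq> E" and s: "s \<notin> W"
    and sx: "\<And>x. x \<in> X \<Longrightarrow> {s, x} \<in> E"
  shows "\<And>x. x \<in> X \<Longrightarrow> path_between E s t (s # q x)"
    and "\<And>x e. x \<in> X \<Longrightarrow> e \<in> path_edges (s # q x) \<Longrightarrow> e = {s, x} \<or> e \<subseteq> W"
    and "inj_on (\<lambda>x. s # q x) X"
    and "disjoint_family_on path_edges ((\<lambda>x. s # q x) ` X)"
proof -
  have ext: "path_between E s t (s # q x) \<and> path_edges (s # q x) = insert {s, x} (path_edges (q x))
      \<and> (\<forall>e\<in>path_edges (q x). e \<subseteq> W)" if x: "x \<in> X" for x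
  proof -
    have "set (q x) \<subseteq> W" "\<forall>e\<in>path_edges (q x). e \<subseteq> W"
      using q[OF x] FW by (auto simp: path_between_def is_path_iff simp flip: Union_path_edges)
    moreover have "path_between E x t (q x)" using q[OF x] FE by (rule path_between_mono)
    ultimately show ?thesis using s sx[OF x] by (auto dest: path_between_Cons)
  qed
  then show "path_between E s t (s # q x)" if "x \<in> X" for x
    using that by blast
  from ext show "e = {s, x} \<or> e \<subseteq> W" if "x \<in> X" "e \<in> path_edges (s # q x)" for x e
    using that by auto
  show "inj_on (\<lambda>x. s # q x) X"
  proof (rule inj_onI)
    fix x y assume "x \<in> X" "y \<in> X" "s # q x = s # q y"
    then show "x = y" using q by (metis list.inject path_between_def)
  qed
  show "disjoint_family_on path_edges ((\<lambda>x. s # q x) ` X)"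
    unfolding disjoint_family_on_def
  proof (intro ballI impI)
    fix p p' assume "p \<in> (\<lambda>x. s # q x) ` X" "p' \<in> (\<lambda>x. s # q x) ` X" "p \<noteq> p'"
    then obtain x y where xy: "x \<in> X" "y \<in> X" "x \<noteq> y" "p = s # q x" "p' = s # q y" by blast
    then show "path_edges p \<inter> path_edges p' = {}"
      using ext[OF xy(1)] ext[OF xy(2)] disjoint_family_onD[OF disj xy(1-3)] s
      by (auto simp: doubleton_eq_iff)
  qed
qed

lemma crossing_path_second_vertex:
  assumes p: "path_between E s t p" "p \<noteq> [s, t]" "\<forall>e\<in>path_edges p. crossing V W e"
    and "s \<in> V" "V \<inter> W = {}"
  shows "hd (tl p) \<in> interior p" "{s, hd (tl p)} \<in> path_edges p" "hd (tl p) \<in> W"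
proof -
  show "hd (tl p) \<in> interior p" and edge: "{s, hd (tl p)} \<in> path_edges p"
    using second_vertex_in_interior[OF p(1,2)] by auto
  show "hd (tl p) \<in> W" using crossing_other_end[OF bspec[OF p(3) edge] assms(4,5)] .
qed

lemma rerouted_paths_target_side:
  assumes W: "finite W" "edge_connectivity_ge W (induced_edges E W) (card P)" "V \<inter> W = {}"
    and st: "s \<in> V" "t \<in> W"
    and P: "\<And>p. p \<in> P \<Longrightarrow> path_between E s t p \<and> p \<noteq> [s, t] \<and> (\<forall>e\<in>path_edges p. crossing V W e)"
    and int: "disjoint_family_on interior P"
  obtains Q where "edge_disjoint_paths E s t Q" "card Q = card P"
    "\<And>q e. q \<in> Q \<Longrightarrow> e \<in> path_edges q \<Longrightarrow> e \<subseteq> W \<or> (s \<in> e \<and> (\<exists>p\<in>P. e \<in> path_edges p))"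
proof -
  define X where "X = (\<lambda>p. hd (tl p)) ` P"
  have second: "hd (tl p) \<in> interior p" "{s, hd (tl p)} \<in> path_edges p" "hd (tl p) \<in> W"
    if "p \<in> P" for p
    using crossing_path_second_vertex[of E s t p V W] P[OF that] st(1) W(3) by auto
  have "inj_on (\<lambda>p. hd (tl p)) P"
  proof (rule inj_onI, rule ccontr)
    fix p p' assume "p \<in> P" "p' \<in> P" "hd (tl p) = hd (tl p')" "p \<noteq> p'"
    then show False
      using disjoint_family_onD[OF int, of p p'] second(1)[of p] second(1)[of p'] by auto
  qed
  then have cardX: "card X = card P" by (simp add: X_def card_image)
  have "t \<notin> interior p" if "p \<in> P" for p
    using path_between_interior(3)[of E s t p] P[OF that] by blast
  then have XW: "X \<subseteq> W" "t \<notin> X"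
    unfolding X_def using second(1,3) by blast+
  have FW: "\<forall>e\<in>induced_edges E W. e \<subseteq> W" by (simp add: induced_edges_def)
  obtain q where q: "\<forall>x\<in>X. path_between (induced_edges E W) x t (q x)"
    "disjoint_family_on (\<lambda>x. path_edges (q x)) X"
    by (rule edge_disjoint_fan[OF W(1) FW W(2)[folded cardX] XW(1) st(2) XW(2)])
  have sx: "{s, x} \<in> E" "\<exists>p\<in>P. {s, x} \<in> path_edges p" if "x \<in> X" for x
    using that second(2) P by (force simp: X_def path_between_def is_path_iff)+
  have "induced_edges E W \<subseteq> E" "s \<notin> W" using st(1) W(3) by (auto simp: induced_edges_def)
  note ext = fan_extend_source[OF bspec[OF q(1)] q(2) FW this sx(1)]
  show thesis
  proof (rule that[of "(\<lambda>x. s # q x) ` X"])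
    have "finite X" using XW(1) W(1) finite_subset by blast
    then show "edge_disjoint_paths E s t ((\<lambda>x. s # q x) ` X)"
      using ext(1,4) by (auto simp: edge_disjoint_paths_def)
    show "card ((\<lambda>x. s # q x) ` X) = card P" using ext(3) by (simp add: card_image cardX)
    show "e \<subseteq> W \<or> (s \<in> e \<and> (\<exists>p\<in>P. e \<in> path_edges p))"
      if "p \<in> (\<lambda>x. s # q x) ` X" "e \<in> path_edges p" for p e
      using that ext(2) sx(2) by blast
  qed
qed

lemma rerouted_paths_source_side:
  assumes V: "finite V" "edge_connectivity_ge V (induced_edges E V) (card P)" "V \<inter> W = {}"
    and st: "s \<in> V" "t \<in> W"
    and P: "\<And>p. p \<in> P \<Longrightarrow> path_between E s t p \<and> p \<noteq> [s, t] \<and> (\<forall>e\<in>path_edges p. crossing V W e)"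
    and int: "disjoint_family_on interior P"
  obtains Q where "edge_disjoint_paths E s t Q" "card Q = card P"
    "\<And>q e. q \<in> Q \<Longrightarrow> e \<in> path_edges q \<Longrightarrow> e \<subseteq> V \<or> (t \<in> e \<and> (\<exists>p\<in>P. e \<in> path_edges p))"
proof -
  have "inj_on rev P" by (simp add: inj_on_def)
  then have card_rev: "card (rev ` P) = card P" by (simp add: card_image)
  have "path_between E t s p \<and> p \<noteq> [t, s] \<and> (\<forall>e\<in>path_edges p. crossing W V e)"
    if "p \<in> rev ` P" for p
    using that by (elim imageE) (use P in \<open>auto simp: path_between_rev crossing_commute\<close>)
  moreover have "disjoint_family_on interior (rev ` P)"
    using int by (auto simp: disjoint_family_on_def)
  moreover have "W \<inter> V = {}" using V(3) by blast
  ultimately obtain Q where Q: "edge_disjoint_paths E t s Q" "card Q = card (rev ` P)"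
    "\<And>q e. q \<in> Q \<Longrightarrow> e \<in> path_edges q \<Longrightarrow> e \<subseteq> V \<or> (t \<in> e \<and> (\<exists>p\<in>rev ` P. e \<in> path_edges p))"
    using rerouted_paths_target_side[OF V(1) V(2)[folded card_rev] _ st(2,1)] by blast
  show thesis
  proof (rule that[of "rev ` Q"])
    show "edge_disjoint_paths E s t (rev ` Q)"
      using Q(1) by (auto simp: edge_disjoint_paths_def disjoint_family_on_def path_between_rev)
    have "inj_on rev Q" by (simp add: inj_on_def)
    then show "card (rev ` Q) = card P" using Q(2) card_rev by (simp add: card_image)
    show "e \<subseteq> V \<or> (t \<in> e \<and> (\<exists>p\<in>P. e \<in> path_edges p))"
      if "q \<in> rev ` Q" "e \<in> path_edges q" for q e
    proof -
      from that(1) obtain q' where "q' \<in> Q" "q = rev q'" by blast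
      with that(2) Q(3)[of q' e] show ?thesis by auto
    qed
  qed
qed

lemma edge_disjoint_Un:
  assumes "disjoint_family_on path_edges A" "disjoint_family_on path_edges B"
    and "\<And>p. p \<in> A \<Longrightarrow> path_edges p \<subseteq> EA" "\<And>q. q \<in> B \<Longrightarrow> path_edges q \<subseteq> EB"
    and "EA \<inter> EB \<subseteq> {{}}" "\<And>p. p \<in> A \<Longrightarrow> path_edges p \<noteq> {}"
  shows "disjoint_family_on path_edges (A \<union> B)" "A \<inter> B = {}"
proof -
  have cross: "path_edges p \<inter> path_edges q = {}" if "p \<in> A" "q \<in> B" for p q
    using assms(3-5) that empty_notin_path_edges[of p] by blast
  with assms(1,2) show "disjoint_family_on path_edges (A \<union> B)"
    unfolding disjoint_family_on_def by blast
  from cross assms(6) show "A \<inter> B = {}" by blast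
qed

lemma rerouted_families_edge_disjoint:
  assumes disj: "V1 \<inter> V2 = {}"
    and P: "edge_disjoint_paths E v1 v2 P" "\<And>p e. p \<in> P \<Longrightarrow> e \<in> path_edges p \<Longrightarrow> crossing V1 V2 e"
    and P0: "P0 \<subseteq> P" "[v1, v2] \<notin> P0"
    and A: "edge_disjoint_paths E v1 v2 A"
      "\<And>q e. q \<in> A \<Longrightarrow> e \<in> path_edges q \<Longrightarrow> e \<subseteq> V2 \<or> (v1 \<in> e \<and> (\<exists>p\<in>P0. e \<in> path_edges p))"
    and B: "edge_disjoint_paths E v1 v2 B"
      "\<And>q e. q \<in> B \<Longrightarrow> e \<in> path_edges q \<Longrightarrow> e \<subseteq> V1 \<or> (v2 \<in> e \<and> (\<exists>p\<in>P0. e \<in> path_edges p))"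
  shows "edge_disjoint_paths E v1 v2 (P - P0 \<union> A \<union> B)"
    and "card (P - P0 \<union> A \<union> B) = card (P - P0) + card A + card B"
proof -
  txt \<open>Edges available to the kept paths and to the two rerouted families.\<close>
  define EK where "EK = {e. crossing V1 V2 e \<and> (\<forall>p\<in>P0. e \<notin> path_edges p)}"
  define EA where "EA = Pow V2 \<union> {e. v1 \<in> e \<and> (\<exists>p\<in>P0. e \<in> path_edges p)}"
  define EB where "EB = Pow V1 \<union> {e. v2 \<in> e \<and> (\<exists>p\<in>P0. e \<in> path_edges p)}"
  have "crossing V1 V2 e \<and> \<not> (v1 \<in> e \<and> v2 \<in> e)" if "p \<in> P0" "e \<in> path_edges p" for p e
    using that P P0 path_edge_not_both_ends[of E v1 v2 p e] by (auto simp: edge_disjoint_paths_def)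
  then have cut: "EK \<inter> EA \<subseteq> {{}}" "(EK \<union> EA) \<inter> EB \<subseteq> {{}}"
    using crossing_not_subset[OF _ disj] disj by (auto simp: EK_def EA_def EB_def)
  have P_disj: "disjoint_family_on path_edges P" using P(1) by (simp add: edge_disjoint_paths_def)
  then have K_disj: "disjoint_family_on path_edges (P - P0)"
    by (rule disjoint_family_on_mono[rotated]) blast
  have K_edges: "path_edges q \<subseteq> EK" if "q \<in> P - P0" for q
    using that P(2) P0(1) disjoint_family_onD[OF P_disj] unfolding EK_def by fastforce
  have nonempty: "path_edges q \<noteq> {}" if "q \<in> P - P0 \<union> A" for q
    using that P(1) A(1) by (auto simp: edge_disjoint_paths_def dest: path_between_edges_nonempty)
  have A_edges: "path_edges q \<subseteq> EA" if "q \<in> A" for q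
    using A(2)[OF that] by (auto simp: EA_def)
  have B_edges: "path_edges q \<subseteq> EB" if "q \<in> B" for q
    using B(2)[OF that] by (auto simp: EB_def)
  have KA: "disjoint_family_on path_edges (P - P0 \<union> A)" "(P - P0) \<inter> A = {}"
    using edge_disjoint_Un[OF K_disj _ K_edges A_edges cut(1)] A(1) nonempty
    by (auto simp: edge_disjoint_paths_def)
  have "path_edges q \<subseteq> EK \<union> EA" if "q \<in> P - P0 \<union> A" for q
    using that K_edges A_edges by blast
  from edge_disjoint_Un[OF KA(1) _ this B_edges cut(2) nonempty] B(1)
  have KAB: "disjoint_family_on path_edges (P - P0 \<union> A \<union> B)" "(P - P0 \<union> A) \<inter> B = {}"
    by (auto simp: edge_disjoint_paths_def)
  with P(1) A(1) B(1) show "edge_disjoint_paths E v1 v2 (P - P0 \<union> A \<union> B)"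
    by (auto simp: edge_disjoint_paths_def)
  show "card (P - P0 \<union> A \<union> B) = card (P - P0) + card A + card B"
    using KA(2) KAB(2) P(1) A(1) B(1) by (simp add: card_Un_disjoint edge_disjoint_paths_def)
qed

lemma reroute_crossing_paths:
  assumes fin: "finite V1" "finite V2" and disj: "V1 \<inter> V2 = {}" and v: "v1 \<in> V1" "v2 \<in> V2"
    and conn: "edge_connectivity_ge V1 (induced_edges E V1) (card P0)"
      "edge_connectivity_ge V2 (induced_edges E V2) (card P0)"
    and P: "edge_disjoint_paths E v1 v2 P" "\<And>p e. p \<in> P \<Longrightarrow> e \<in> path_edges p \<Longrightarrow> crossing V1 V2 e"
    and P0: "P0 \<subseteq> P" "[v1, v2] \<notin> P0" "disjoint_family_on interior P0"
  obtains Q where "edge_disjoint_paths E v1 v2 Q" "card Q = card (P - P0) + 2 * card P0"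
proof -
  have P0_paths: "path_between E v1 v2 p \<and> p \<noteq> [v1, v2] \<and> (\<forall>e\<in>path_edges p. crossing V1 V2 e)"
    if "p \<in> P0" for p
    using that P P0 by (auto simp: edge_disjoint_paths_def)
  obtain A where A: "edge_disjoint_paths E v1 v2 A" "card A = card P0"
    "\<And>q e. q \<in> A \<Longrightarrow> e \<in> path_edges q \<Longrightarrow> e \<subseteq> V2 \<or> (v1 \<in> e \<and> (\<exists>p\<in>P0. e \<in> path_edges p))"
    using rerouted_paths_target_side[OF fin(2) conn(2) disj v P0_paths P0(3)] by blast
  obtain B where B: "edge_disjoint_paths E v1 v2 B" "card B = card P0"
    "\<And>q e. q \<in> B \<Longrightarrow> e \<in> path_edges q \<Longrightarrow> e \<subseteq> V1 \<or> (v2 \<in> e \<and> (\<exists>p\<in>P0. e \<in> path_edges p))"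
    using rerouted_paths_source_side[OF fin(1) conn(1) disj v P0_paths P0(3)] by blast
  note families = disj P P0(1,2) A(1,3) B(1,3)
  have "edge_disjoint_paths E v1 v2 (P - P0 \<union> A \<union> B)"
    using families by (rule rerouted_families_edge_disjoint(1))
  moreover have "card (P - P0 \<union> A \<union> B) = card (P - P0) + card A + card B"
    using families by (rule rerouted_families_edge_disjoint(2))
  ultimately show thesis using A(2) B(2) by (intro that[of "P - P0 \<union> A \<union> B"]) simp_all
qed

theorem proposition1:
  fixes V1 V2 :: "'a set" and E :: "'a set set" and n m :: nat and v1 v2 :: 'a
  assumes graph: "simple_graph (V1 \<union> V2) E"
    and disj: "V1 \<inter> V2 = {}"
    and conn1: "edge_connectivity_ge V1 (induced_edges E V1) n"
    and conn2: "edge_connectivity_ge V2 (induced_edges E V2) n"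
    and deg: "\<forall>x\<in>V1. card {y \<in> V2. {x, y} \<in> E} \<ge> m"
    and mn: "m \<ge> n + 2"
    and v1: "v1 \<in> V1" and v2: "v2 \<in> V2" and adj: "{v1, v2} \<in> E"
    and paths: "\<exists>P. card P = m \<and> finite P \<and>
       (\<forall>p\<in>P. path_between E v1 v2 p \<and>
          (\<forall>e\<in>path_edges p. \<exists>x y. e = {x, y} \<and> x \<in> V1 \<and> y \<in> V2)) \<and>
       (\<forall>p\<in>P. \<forall>q\<in>P. p \<noteq> q \<longrightarrow> interior p \<inter> interior q = {})"
  shows "\<exists>Q. card Q = m + n \<and> finite Q \<and>
       (\<forall>p\<in>Q. path_between E v1 v2 p) \<and>
       (\<forall>p\<in>Q. \<forall>q\<in>Q. p \<noteq> q \<longrightarrow> path_edges p \<inter> path_edges q = {})"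
proof -
  from paths obtain P where P: "card P = m" "finite P" "disjoint_family_on interior P"
    "\<And>p. p \<in> P \<Longrightarrow> path_between E v1 v2 p"
    "\<And>p e. p \<in> P \<Longrightarrow> e \<in> path_edges p \<Longrightarrow> crossing V1 V2 e"
    unfolding crossing_def disjoint_family_on_def by auto
  have "disjoint_family_on path_edges P"
    using P(3,4) by (rule internally_disjoint_imp_edge_disjoint[rotated])
  with P(2,4) have Pdisj: "edge_disjoint_paths E v1 v2 P" by (simp add: edge_disjoint_paths_def)
  have "n \<le> card (P - {[v1, v2]})" using P(1,2) mn by (auto simp: card_Diff_singleton_if)
  then obtain P0 where P0: "P0 \<subseteq> P - {[v1, v2]}" "card P0 = n"
    by (meson obtain_subset_with_card_n)
  then have P0P: "P0 \<subseteq> P" "[v1, v2] \<notin> P0" "disjoint_family_on interior P0"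
    using disjoint_family_on_mono[OF _ P(3)] by auto
  have fin: "finite V1" "finite V2" using graph by (auto simp: simple_graph_def)
  obtain Q where "edge_disjoint_paths E v1 v2 Q" "card Q = card (P - P0) + 2 * card P0"
    by (rule reroute_crossing_paths[OF fin disj v1 v2 conn1[folded P0(2)] conn2[folded P0(2)]
          Pdisj P(5) P0P])
  moreover have "card (P - P0) + 2 * card P0 = m + n"
    using P(1,2) P0P(1) P0(2) mn by (simp add: card_Diff_subset finite_subset)
  ultimately show ?thesis
    unfolding edge_disjoint_paths_def disjoint_family_on_def by auto
qed

end
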